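(* Let $k\geq 1$ and $\Sigma=\{a_1,\dots,a_{k+1}\}$. Let $L\subseteq(\Sigma\times D)^*$ be the set of data words $w$ such that (i) for every $j\in\{1,\dots,k+1\}$, the data values occurring in $w$ together with attribute $a_j$ are pairwise distinct (no data value occurs twice with attribute $a_j$), and (ii) the projection of $w$ onto $\Sigma$ belongs to $a_1^*a_2^*\cdots a_{k+1}^*$. Then no SAFA $M=(Q,\Sigma\times D,q_0,F,H,\delta)$ with $|H|=k$ accepts $L$.
   Context: $D$ is a fixed countably infinite set of data values; a data word over $\Sigma$ is an element of $(\Sigma\times D)^*$, and its projection onto $\Sigma$ is the word of attributes. A set augmented finite automaton (SAFA) is a tuple $M=(Q,\Sigma\times D,q_0,F,H,\delta)$: $Q$ finite set of states, $q_0\in Q$ initial, $F\subseteq Q$ final, $H=\{h_1,\dots,h_m\}$ a finite collection of (names of) sets of data values, $\delta\subseteq Q\times\Sigma\times C\times OP\times Q$ with $C=\{p(h_i),\,!p(h_i): h_i\in H\}$, $OP=\{-\}\cup\{\mathsf{ins}(h_i):h_i\in H\}$. Configurations are $(q,\langle S_1,\dots,S_m\rangle)$ with $S_i\subseteq D$ finite; initially state $q_0$ and all sets empty. On reading $(a,d)$, a transition $(q,a,\alpha,op,q')$ from the current state may be taken if $\alpha=p(h_i)$ and $d\in S_i$, or $\alpha=\,!p(h_i)$ and $d\notin S_i$; then the state becomes $q'$ and if $op=\mathsf{ins}(h_j)$ the value $d$ is added to $S_j$ ($op=-$ changes nothing). A word is accepted if some run reads it entirely and ends in $F$. *)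

theory Defs
  imports Main "HOL-Library.Countable"
begin

text \<open>Sets of data values are named by indices 0..m-1 (so H = {h_0,...,h_(m-1)}, |H| = m).\<close>

datatype cond = Mem nat | NotMem nat
datatype setop = NoOp | Ins nat

record ('q, 'a) safa =
  states :: "'q set"
  init   :: 'q
  final  :: "'q set"
  nsets  :: nat
  delta  :: "('q \<times> 'a \<times> cond \<times> setop \<times> 'q) set"

definition cond_ok :: "nat \<Rightarrow> cond \<Rightarrow> bool" where
  "cond_ok m c = (case c of Mem i \<Rightarrow> i < m | NotMem i \<Rightarrow> i < m)"

definition op_ok :: "nat \<Rightarrow> setop \<Rightarrow> bool" where
  "op_ok m p = (case p of NoOp \<Rightarrow> True | Ins i \<Rightarrow> i < m)"

definition wf_safa :: "('q, 'a) safa \<Rightarrow> 'a set \<Rightarrow> bool" where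
  "wf_safa M Sig \<longleftrightarrow> finite (states M) \<and> init M \<in> states M \<and> final M \<subseteq> states M \<and>
     (\<forall>(q, a, c, p, q') \<in> delta M. q \<in> states M \<and> a \<in> Sig \<and> cond_ok (nsets M) c
        \<and> op_ok (nsets M) p \<and> q' \<in> states M)"

definition sat :: "cond \<Rightarrow> (nat \<Rightarrow> 'd set) \<Rightarrow> 'd \<Rightarrow> bool" where
  "sat c S d = (case c of Mem i \<Rightarrow> d \<in> S i | NotMem i \<Rightarrow> d \<notin> S i)"

definition apply_op :: "setop \<Rightarrow> (nat \<Rightarrow> 'd set) \<Rightarrow> 'd \<Rightarrow> (nat \<Rightarrow> 'd set)" where
  "apply_op p S d = (case p of NoOp \<Rightarrow> S | Ins j \<Rightarrow> S(j := insert d (S j)))"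

inductive runs :: "('q, 'a) safa \<Rightarrow> 'q \<times> (nat \<Rightarrow> 'd set) \<Rightarrow> ('a \<times> 'd) list
                     \<Rightarrow> 'q \<times> (nat \<Rightarrow> 'd set) \<Rightarrow> bool" for M where
  runs_Nil: "runs M c [] c"
| runs_Cons: "\<lbrakk> (q, a, c, p, q') \<in> delta M; sat c S d;
               runs M (q', apply_op p S d) w c' \<rbrakk> \<Longrightarrow> runs M (q, S) ((a, d) # w) c'"

definition accepts :: "('q, 'a) safa \<Rightarrow> ('a \<times> 'd) list \<Rightarrow> bool" where
  "accepts M w \<longleftrightarrow> (\<exists>q S. runs M (init M, \<lambda>_. {}) w (q, S) \<and> q \<in> final M)"

definition lang :: "('q, 'a) safa \<Rightarrow> 'a set \<Rightarrow> ('a \<times> 'd) list set" where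
  "lang M Sig = {w. set (map fst w) \<subseteq> Sig \<and> accepts M w}"

text \<open>Attributes a_1,...,a_(k+1) are the naturals 1..k+1. The language L_k.\<close>
definition L :: "nat \<Rightarrow> (nat \<times> 'd) list set" where
  "L k = {w. set (map fst w) \<subseteq> {1..k+1}
            \<and> (\<forall>j \<in> {1..k+1}. distinct (map snd (filter (\<lambda>x. fst x = j) w)))
            \<and> sorted (map fst w)}"

end

theory Submission
  imports Defs "HOL-Combinatorics.Transposition"
begin

(* Let the profile of a data value d in a configuration be the set of indices i with d \<in> S_i.
   Along a run profiles only grow, and with k sets they stay inside {0..k-1}.
   Feed the automaton the word of L consisting of k+1 blocks (a_j, f 0) ... (a_j, f (N-1)),
   j = 1..k+1, with f injective and N large. By pigeonhole two values f l, f m with l < m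
   have equal profiles at all k+2 block boundaries. If the profile of f l did not grow across
   the block of a_j, then right before (a_j, f m) is read, f m still has its profile from the
   start of the block and f l already has its profile from the end of the block, so the two
   values are indistinguishable there: transposing them in the rest of the word keeps it
   accepted, but now (a_j, f l) occurs twice, so the word is not in L. Hence the profile of
   f l grows strictly across each of the k+1 blocks, which is impossible inside {0..k-1}.
   The argument does not need k \<ge> 1. *)

inductive_cases runs_NilE: "runs M c [] c'"
inductive_cases runs_ConsE: "runs M c (y # w) c'"

lemma runs_append_intro: "runs M c u c'' \<Longrightarrow> runs M c'' v c' \<Longrightarrow> runs M c (u @ v) c'"
  by (induction rule: runs.induct) (auto intro: runs_Cons)

lemma runs_append_split: "runs M c (u @ v) c' \<Longrightarrow> \<exists>c''. runs M c u c'' \<and> runs M c'' v c'"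
proof (induction u arbitrary: c)
  case Nil
  then show ?case by (metis append_Nil runs_Nil)
next
  case (Cons y u)
  from Cons.prems obtain a d q S cc p q' where "y = (a, d)" and "c = (q, S)"
    and "(q, a, cc, p, q') \<in> delta M" and "sat cc S d" and "runs M (q', apply_op p S d) (u @ v) c'"
    by (auto elim: runs_ConsE)
  with Cons.IH show ?case by (blast intro: runs_Cons)
qed

lemma runs_rename:
  assumes "runs M c w c'" "inj h"
  shows "runs M (fst c, \<lambda>i. h ` snd c i) (map (apsnd h) w) (fst c', \<lambda>i. h ` snd c' i)"
  using assms(1)
proof (induction rule: runs.induct)
  case (runs_Nil c)
  then show ?case by (simp add: runs.runs_Nil)
next
  case (runs_Cons q a cc p q' S d w c')
  have "sat cc (\<lambda>i. h ` S i) (h d)"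
    using runs_Cons.hyps(2) assms(2) by (auto simp: sat_def inj_image_mem_iff split: cond.splits)
  moreover have "apply_op p (\<lambda>i. h ` S i) (h d) = (\<lambda>i. h ` apply_op p S d i)"
    by (auto simp: apply_op_def fun_eq_iff split: setop.splits)
  ultimately show ?case
    using runs_Cons.hyps(1) runs_Cons.IH by (auto intro: runs.runs_Cons)
qed

lemma runs_sets_mono: "runs M c w c' \<Longrightarrow> snd c i \<subseteq> snd c' i"
  by (induction rule: runs.induct) (auto simp: apply_op_def split: setop.splits)

lemma runs_sets_subset_read: "runs M c w c' \<Longrightarrow> snd c' i \<subseteq> snd c i \<union> snd ` set w"
  by (induction rule: runs.induct) (auto simp: apply_op_def split: setop.splits if_splits)

lemma runs_mem_iff_unread:
  "runs M c w c' \<Longrightarrow> d \<notin> snd ` set w \<Longrightarrow> d \<in> snd c' i \<longleftrightarrow> d \<in> snd c i"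
  using runs_sets_mono runs_sets_subset_read by blast

lemma runs_set_unchanged_beyond_nsets:
  assumes "wf_safa M Sig" "nsets M \<le> i"
  shows "runs M c w c' \<Longrightarrow> snd c' i = snd c i"
  by (induction rule: runs.induct) (use assms in
    \<open>fastforce simp: wf_safa_def op_ok_def apply_op_def split: setop.splits\<close>)+

lemma runs_concat:
  assumes "runs M c (concat ws) c'"
  obtains C where "\<And>b. b < length ws \<Longrightarrow> runs M (C b) (ws ! b) (C (Suc b))"
    and "\<And>b. b \<le> length ws \<Longrightarrow> runs M c (concat (take b ws)) (C b)"
    and "\<And>b. b \<le> length ws \<Longrightarrow> runs M (C b) (concat (drop b ws)) c'"
proof -
  have "\<exists>C. (\<forall>b<length ws. runs M (C b) (ws ! b) (C (Suc b)))
    \<and> (\<forall>b\<le>length ws.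
          runs M c (concat (take b ws)) (C b) \<and> runs M (C b) (concat (drop b ws)) c')"
    using assms
  proof (induction ws arbitrary: c)
    case Nil
    then show ?case by (auto intro!: exI[of _ "\<lambda>_. c"] runs_Nil)
  next
    case (Cons u ws)
    then obtain c1 where head: "runs M c u c1" and rest: "runs M c1 (concat ws) c'"
      using runs_append_split[of M c u "concat ws" c'] by auto
    from Cons.IH[OF rest] obtain C where
      blocks: "\<forall>b<length ws. runs M (C b) (ws ! b) (C (Suc b))" and
      splits: "\<forall>b\<le>length ws.
          runs M c1 (concat (take b ws)) (C b) \<and> runs M (C b) (concat (drop b ws)) c'"
      by blast
    have "C 0 = c1"
      using splits[rule_format, of 0] by (auto elim: runs_NilE)
    define C' where "C' = case_nat c C"
    have "runs M (C' b) ((u # ws) ! b) (C' (Suc b))" if "b < length (u # ws)" for b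
    proof (cases b)
      case 0
      then show ?thesis using head \<open>C 0 = c1\<close> by (simp add: C'_def)
    next
      case (Suc b')
      then show ?thesis using that blocks by (simp add: C'_def)
    qed
    moreover have "runs M c (concat (take b (u # ws))) (C' b)
        \<and> runs M (C' b) (concat (drop b (u # ws))) c'" if "b \<le> length (u # ws)" for b
    proof (cases b)
      case 0
      then show ?thesis using Cons.prems by (simp add: C'_def runs_Nil)
    next
      case (Suc b')
      then show ?thesis
        using that splits head by (simp add: C'_def runs_append_intro)
    qed
    ultimately show ?case
      by blast
  qed
  then show thesis
    using that by blast
qed

lemma accepts_transpose_suffix:
  assumes "runs M (init M, \<lambda>_. {}) u c" and "runs M c v cf" and "fst cf \<in> final M"
    and "\<forall>i. d \<in> snd c i \<longleftrightarrow> e \<in> snd c i"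
  shows "accepts M (u @ map (apsnd (transpose d e)) v)"
proof -
  have "runs M (fst c, \<lambda>i. transpose d e ` snd c i) (map (apsnd (transpose d e)) v)
      (fst cf, \<lambda>i. transpose d e ` snd cf i)"
    using runs_rename[OF assms(2) inj_transpose] .
  moreover have "(fst c, \<lambda>i. transpose d e ` snd c i) = c"
    using assms(4) by simp
  ultimately show ?thesis
    using assms(1,3) unfolding accepts_def by (metis runs_append_intro fst_conv)
qed

definition profile :: "(nat \<Rightarrow> 'd set) \<Rightarrow> 'd \<Rightarrow> nat set" where
  "profile S d = {i. d \<in> S i}"

lemma profile_subset_nsets:
  assumes "wf_safa M Sig" and "runs M (init M, \<lambda>_. {}) w c"
  shows "profile (snd c) d \<subseteq> {..<nsets M}"
proof
  fix i
  assume "i \<in> profile (snd c) d"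
  then show "i \<in> {..<nsets M}"
    using runs_set_unchanged_beyond_nsets[OF assms(1) _ assms(2), of i]
    by (cases "nsets M \<le> i") (auto simp: profile_def)
qed

definition block :: "(nat \<Rightarrow> 'd) \<Rightarrow> nat \<Rightarrow> 'a \<Rightarrow> ('a \<times> 'd) list" where
  "block f N a = map (\<lambda>r. (a, f r)) [0..<N]"

lemma accepts_repeated_datum:
  fixes f :: "nat \<Rightarrow> 'd" and a :: 'a
  assumes "inj f" and "l < m" and "m < N"
    and "runs M (init M, \<lambda>_. {}) u c" and "runs M c (block f N a) c'"
    and "runs M c' v cf" and "fst cf \<in> final M"
    and "profile (snd c) (f m) = profile (snd c') (f l)"
  shows "\<exists>w' :: ('a \<times> 'd) list. accepts M w' \<and> map fst w' = map fst (u @ block f N a @ v)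
    \<and> \<not> distinct (map snd (filter (\<lambda>x. fst x = a) w'))"
proof -
  define pre suf
    where "pre = map (\<lambda>r. (a, f r)) [0..<m]" and "suf = map (\<lambda>r. (a, f r)) [m..<N]"
  have "block f N a = pre @ suf"
    using upt_add_eq_append[of 0 m "N - m"] assms(3) by (simp add: block_def pre_def suf_def)
  with assms(5) obtain cm where pre_run: "runs M c pre cm" and suf_run: "runs M cm suf c'"
    using runs_append_split by metis
  have "f m \<notin> snd ` set pre" "f l \<notin> snd ` set suf"
    using assms(1,2) by (auto simp: pre_def suf_def inj_eq)
  then have "f m \<in> snd cm i \<longleftrightarrow> f m \<in> snd c i" "f l \<in> snd c' i \<longleftrightarrow> f l \<in> snd cm i" for i
    using runs_mem_iff_unread[OF pre_run] runs_mem_iff_unread[OF suf_run] by auto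
  then have indist: "\<forall>i. f l \<in> snd cm i \<longleftrightarrow> f m \<in> snd cm i"
    using assms(8) by (auto simp: profile_def set_eq_iff)
  define w' where "w' = (u @ pre) @ map (apsnd (transpose (f l) (f m))) (suf @ v)"
  have "accepts M w'"
    unfolding w'_def using assms(4,6,7) pre_run suf_run indist
    by (blast intro: accepts_transpose_suffix runs_append_intro)
  moreover have "map fst w' = map fst (u @ block f N a @ v)"
    using \<open>block f N a = pre @ suf\<close> by (simp add: w'_def comp_def)
  moreover have "\<not> distinct (map snd (filter (\<lambda>x. fst x = a) w'))"
  proof -
    let ?P = "\<lambda>x. fst x = a" and ?\<tau> = "apsnd (transpose (f l) (f m))"
    have "f l \<in> set (map snd (filter ?P (u @ pre)))"
      using assms(2) by (force simp: pre_def)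
    moreover have "suf = (a, f m) # map (\<lambda>r. (a, f r)) [Suc m..<N]"
      using assms(3) by (simp add: suf_def upt_conv_Cons)
    then have "map snd (filter ?P w') = map snd (filter ?P (u @ pre))
        @ f l # map snd (filter ?P (map ?\<tau> (map (\<lambda>r. (a, f r)) [Suc m..<N] @ v)))"
      by (simp add: w'_def)
    ultimately show ?thesis
      by (metis distinct_append disjoint_iff list.set_intros(1))
  qed
  ultimately show ?thesis
    by blast
qed

lemma profile_grows_across_block:
  fixes f :: "nat \<Rightarrow> 'd" and M :: "('q, nat) safa"
  assumes "lang M Sig \<subseteq> (L k :: (nat \<times> 'd) list set)"
    and "set (map fst (u @ block f N j @ v)) \<subseteq> Sig"
    and "j \<in> {1..k+1}" and "inj f" and "l < m" and "m < N"
    and "runs M (init M, \<lambda>_. {}) u c" and "runs M c (block f N j) c'"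
    and "runs M c' v cf" and "fst cf \<in> final M"
    and "profile (snd c) (f l) = profile (snd c) (f m)"
  shows "profile (snd c) (f l) \<subset> profile (snd c') (f l)"
proof
  show "profile (snd c) (f l) \<subseteq> profile (snd c') (f l)"
    using runs_sets_mono[OF assms(8)] by (auto simp: profile_def)
  show "profile (snd c) (f l) \<noteq> profile (snd c') (f l)"
  proof
    assume "profile (snd c) (f l) = profile (snd c') (f l)"
    then obtain w' :: "(nat \<times> 'd) list" where "accepts M w'"
      and attrs: "map fst w' = map fst (u @ block f N j @ v)"
      and "\<not> distinct (map snd (filter (\<lambda>x. fst x = j) w'))"
      using accepts_repeated_datum[OF assms(4-10)] assms(11) by metis
    moreover have "set (map fst w') \<subseteq> Sig"
      unfolding attrs by (fact assms(2))
    ultimately have "w' \<in> L k"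
      using assms(1) unfolding lang_def by blast
    with \<open>\<not> distinct (map snd (filter (\<lambda>x. fst x = j) w'))\<close> show False
      using assms(3) unfolding L_def by blast
  qed
qed

lemma psubset_chain_length_le_card:
  assumes "\<And>b. b < n \<Longrightarrow> A b \<subset> A (Suc b)" and "A n \<subseteq> B" and "finite B"
  shows "n \<le> card B"
proof -
  have "n \<le> card (A n)" if "finite (A n)"
    using assms(1) that
  proof (induction n)
    case 0
    then show ?case by simp
  next
    case (Suc n)
    then have "A n \<subset> A (Suc n)"
      by simp
    with Suc.prems(2) have "finite (A n)" and "card (A n) < card (A (Suc n))"
      by (auto intro: psubset_card_mono finite_subset)
    with Suc show ?case
      by simp
  qed
  also have "card (A n) \<le> card B"
    using assms(2,3) by (rule card_mono[rotated])
  finally show ?thesis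
    using assms(2,3) finite_subset by blast
qed

lemma filter_block:
  "filter (\<lambda>x. fst x = j) (block f N a) = (if a = j then block f N j else [])"
  by (simp add: block_def filter_map comp_def)

lemma concat_blocks_in_L:
  fixes f :: "nat \<Rightarrow> 'd"
  assumes "inj f"
  shows "concat (map (block f N) [1..<k+2]) \<in> L k"
proof -
  define n where "n = k + 2"
  let ?w = "concat (map (block f N) [1..<n])"
  have attrs: "map fst ?w = concat (map (\<lambda>j. replicate N j) [1..<n])"
    by (simp add: block_def map_concat comp_def map_replicate_const)
  have "sorted (concat (map (\<lambda>j. replicate N j) [1..<n']))" for n'
    by (induction n') (auto simp: sorted_append)
  then have "sorted (map fst ?w)"
    unfolding attrs .
  moreover have "set (map fst ?w) \<subseteq> {1..k+1}"
    unfolding attrs by (auto simp: n_def)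
  moreover have "distinct (map snd (filter (\<lambda>x. fst x = j) ?w))" if "j \<in> {1..k+1}" for j
  proof -
    let ?g = "\<lambda>a. if a = j then block f N j else []"
    have "filter (\<lambda>x. fst x = j) ?w = concat (map ?g ([1..<j] @ j # [Suc j..<n]))"
      using that upt_add_eq_append[of 1 j "n - j"]
      by (simp add: n_def filter_concat filter_block comp_def upt_conv_Cons)
    moreover have "concat (map ?g [1..<j]) = []" and "concat (map ?g [Suc j..<n]) = []"
      by (auto simp: concat_eq_Nil_conv)
    ultimately have "filter (\<lambda>x. fst x = j) ?w = block f N j"
      by simp
    then show ?thesis
      using inj_on_subset[OF assms subset_UNIV] by (simp add: block_def comp_def distinct_map)
  qed
  ultimately show ?thesis
    unfolding L_def n_def by blast
qed

lemma pigeonhole_sequences: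
  assumes "finite A" and "card A ^ Suc K < n" and "\<And>b r. b \<le> K \<Longrightarrow> p b r \<in> A"
  obtains l m where "l < m" and "m < n" and "\<And>b. b \<le> K \<Longrightarrow> p b l = p b m"
proof -
  define g where "g r = map (\<lambda>b. p b r) [0..<Suc K]" for r
  let ?S = "{xs. set xs \<subseteq> A \<and> length xs = Suc K}"
  have "g ` {..<n} \<subseteq> ?S"
    using assms(3) by (auto simp: g_def less_Suc_eq_le simp del: upt.simps)
  then have "card (g ` {..<n}) \<le> card ?S"
    by (rule card_mono[OF finite_lists_length_eq[OF assms(1)]])
  also have "card ?S < card {..<n}"
    using assms(2) by (simp add: card_lists_length_eq[OF assms(1)])
  finally have "card (g ` {..<n}) < card {..<n}" .
  then have "\<not> inj_on g {..<n}"
    by (rule pigeonhole)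
  then obtain x y where "x < n" "y < n" "x \<noteq> y" and "g x = g y"
    unfolding inj_on_def by auto
  then have "x < n" "y < n" "x \<noteq> y" and "\<And>b. b \<le> K \<Longrightarrow> p b x = p b y"
    by (auto simp: g_def less_Suc_eq_le simp del: upt.simps)
  then show thesis
    using that by (metis linorder_neqE_nat)
qed

theorem theorem1:
  fixes k :: nat and M :: "('q, nat) safa"
  assumes "k \<ge> 1"
    and "infinite (UNIV :: 'd::countable set)"
    and "wf_safa M {1..k+1}"
    and "nsets M = k"
  shows "lang M {1..k+1} \<noteq> (L k :: (nat \<times> 'd) list set)"
proof
  assume lang_eq: "lang M {1..k+1} = (L k :: (nat \<times> 'd) list set)"
  obtain f :: "nat \<Rightarrow> 'd" where f: "inj f"
    using assms(2) unfolding infinite_iff_countable_subset by blast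
  define N where "N = Suc (card (Pow {..<k}) ^ (k + 2))"
  define ws where "ws = map (block f N) [1..<k+2]"
  have ws: "length ws = k + 1" "\<And>b. b < k + 1 \<Longrightarrow> ws ! b = block f N (b + 1)"
    by (simp_all add: ws_def del: upt.simps)
  have "concat ws \<in> L k"
    unfolding ws_def by (rule concat_blocks_in_L[OF f])
  then have attrs: "set (map fst (concat ws)) \<subseteq> {1..k+1}" and "accepts M (concat ws)"
    using lang_eq unfolding L_def lang_def by blast+
  then obtain cf where run: "runs M (init M, \<lambda>_. {}) (concat ws) cf"
    and final: "fst cf \<in> final M"
    unfolding accepts_def by (metis fst_conv)
  obtain C where blocks: "\<And>b. b < length ws \<Longrightarrow> runs M (C b) (ws ! b) (C (Suc b))"
    and prefix: "\<And>b. b \<le> length ws \<Longrightarrow> runs M (init M, \<lambda>_. {}) (concat (take b ws)) (C b)"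
    and suffix: "\<And>b. b \<le> length ws \<Longrightarrow> runs M (C b) (concat (drop b ws)) cf"
    using runs_concat[OF run] by blast
  have bounded: "profile (snd (C b)) d \<in> Pow {..<k}" if "b \<le> k + 1" for b d
    using profile_subset_nsets[OF assms(3) prefix] that ws(1) assms(4) by simp
  obtain l m where "l < m" "m < N"
    and same: "\<And>b. b \<le> k + 1 \<Longrightarrow> profile (snd (C b)) (f l) = profile (snd (C b)) (f m)"
    using pigeonhole_sequences[of "Pow {..<k}" "k + 1" N "\<lambda>b r. profile (snd (C b)) (f r)"] bounded
    by (auto simp: N_def)
  have "profile (snd (C b)) (f l) \<subset> profile (snd (C (Suc b))) (f l)" if "b < k + 1" for b
  proof (rule profile_grows_across_block[where cf = cf, OF equalityD1[OF lang_eq]])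
    have "concat ws = concat (take b ws) @ ws ! b @ concat (drop (Suc b) ws)"
      using that ws(1) by (metis id_take_nth_drop concat.simps(2) concat_append)
    with attrs that ws(2)
    show "set (map fst (concat (take b ws) @ block f N (b + 1) @ concat (drop (Suc b) ws)))
        \<subseteq> {1..k+1}"
      by simp
  qed (use that ws blocks prefix suffix same final f \<open>l < m\<close> \<open>m < N\<close> in auto)
  then have "k + 1 \<le> card {..<k}"
    using bounded[of "k + 1"]
    by (intro psubset_chain_length_le_card[where A = "\<lambda>b. profile (snd (C b)) (f l)"]) auto
  then show False
    by simp
qed

end
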